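(* Let $\mathbb{K}\in\{\mathbb{R},\mathbb{C}\}$, $\mathbf{R}_U\in\mathbb{K}^{n\times n}$ self-adjoint positive definite, $U:=\mathbb{K}^n$ with $\langle\mathbf{x},\mathbf{y}\rangle_U:=\langle\mathbf{R}_U\mathbf{x},\mathbf{y}\rangle$, norm $\|\cdot\|_U$, dual norm $\|\mathbf{y}\|_{U'}:=\langle\mathbf{y},\mathbf{R}_U^{-1}\mathbf{y}\rangle^{1/2}$. Fix $\mu$, an invertible $\mathbf{A}(\mu)\in\mathbb{K}^{n\times n}$, $\mathbf{b}(\mu),\mathbf{l}(\mu)\in\mathbb{K}^n$, $\mathbf{u}(\mu):=\mathbf{A}(\mu)^{-1}\mathbf{b}(\mu)$, $s(\mu):=\langle\mathbf{l}(\mu),\mathbf{u}(\mu)\rangle$, and arbitrary vectors $\mathbf{u}_r(\mu),\mathbf{u}_r^{\mathrm{du}}(\mu)\in U$. Let $\mathbf{r}(\mathbf{x};\mu):=\mathbf{b}(\mu)-\mathbf{A}(\mu)\mathbf{x}$, $\mathbf{r}^{\mathrm{du}}(\mathbf{x};\mu):=-\mathbf{l}(\mu)-\mathbf{A}(\mu)^{\mathrm{H}}\mathbf{x}$, $s_r(\mu):=\langle\mathbf{l}(\mu),\mathbf{u}_r(\mu)\rangle$, let $\mathbf{\Theta}\in\mathbb{K}^{k\times n}$ and $$s_r^{\mathrm{spd}}(\mu):=s_r(\mu)-\langle\mathbf{\Theta}\mathbf{u}_r^{\mathrm{du}}(\mu),\mathbf{\Theta}\mathbf{R}_U^{-1}\mathbf{r}(\mathbf{u}_r(\mu);\mu)\rangle.$$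 Let $\eta(\mu)>0$ satisfy $\eta(\mu)\le\min_{\mathbf{x}\in U\setminus\{\mathbf{0}\}}\|\mathbf{A}(\mu)\mathbf{x}\|_{U'}/\|\mathbf{x}\|_U$. If for some $\varepsilon\in[0,1)$, $|\langle\mathbf{x},\mathbf{y}\rangle_U-\langle\mathbf{\Theta}\mathbf{x},\mathbf{\Theta}\mathbf{y}\rangle|\le\varepsilon\|\mathbf{x}\|_U\|\mathbf{y}\|_U$ for all $\mathbf{x},\mathbf{y}\in\mathrm{span}\{\mathbf{u}_r^{\mathrm{du}}(\mu),\mathbf{R}_U^{-1}\mathbf{r}(\mathbf{u}_r(\mu);\mu)\}$, then $$|s(\mu)-s_r^{\mathrm{spd}}(\mu)|\le\frac{\|\mathbf{r}(\mathbf{u}_r(\mu);\mu)\|_{U'}}{\eta(\mu)}\Big((1+\varepsilon)\|\mathbf{r}^{\mathrm{du}}(\mathbf{u}_r^{\mathrm{du}}(\mu);\mu)\|_{U'}+\varepsilon\|\mathbf{l}(\mu)\|_{U'}\Big).$$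
   Context: $\langle\mathbf{x},\mathbf{y}\rangle=\mathbf{x}^{\mathrm{H}}\mathbf{y}$ is the canonical inner product; $\mathbf{M}^{\mathrm{H}}$ is the (conjugate) transpose. *)

theory Defs
  imports "HOL-Analysis.Analysis"
begin

definition cip :: "complex^'n \<Rightarrow> complex^'n \<Rightarrow> complex" where
  "cip x y = (\<Sum>i\<in>UNIV. cnj (x$i) * y$i)"

definition cadj :: "complex^'n^'m \<Rightarrow> complex^'m^'n" where
  "cadj M = (\<chi> i j. cnj (M$j$i))"

definition rip :: "real^'n \<Rightarrow> real^'n \<Rightarrow> real" where
  "rip x y = (\<Sum>i\<in>UNIV. x$i * y$i)"

definition c_spd :: "complex^'n^'n \<Rightarrow> bool" where
  "c_spd R \<longleftrightarrow> cadj R = R \<and> (\<forall>x. x \<noteq> 0 \<longrightarrow> Re (cip (R *v x) x) > 0)"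

definition r_spd :: "real^'n^'n \<Rightarrow> bool" where
  "r_spd R \<longleftrightarrow> transpose R = R \<and> (\<forall>x. x \<noteq> 0 \<longrightarrow> rip (R *v x) x > 0)"

definition cipU :: "complex^'n^'n \<Rightarrow> complex^'n \<Rightarrow> complex^'n \<Rightarrow> complex" where
  "cipU R x y = cip (R *v x) y"
definition cnormU :: "complex^'n^'n \<Rightarrow> complex^'n \<Rightarrow> real" where
  "cnormU R x = sqrt (Re (cipU R x x))"
definition cnormU' :: "complex^'n^'n \<Rightarrow> complex^'n \<Rightarrow> real" where
  "cnormU' R y = sqrt (Re (cip y (matrix_inv R *v y)))"

definition ripU :: "real^'n^'n \<Rightarrow> real^'n \<Rightarrow> real^'n \<Rightarrow> real" where
  "ripU R x y = rip (R *v x) y"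
definition rnormU :: "real^'n^'n \<Rightarrow> real^'n \<Rightarrow> real" where
  "rnormU R x = sqrt (ripU R x x)"
definition rnormU' :: "real^'n^'n \<Rightarrow> real^'n \<Rightarrow> real" where
  "rnormU' R y = sqrt (rip y (matrix_inv R *v y))"

definition cspan2 :: "complex^'n \<Rightarrow> complex^'n \<Rightarrow> (complex^'n) set" where
  "cspan2 v w = {a *s v + b *s w | a b. True}"
definition rspan2 :: "real^'n \<Rightarrow> real^'n \<Rightarrow> (real^'n) set" where
  "rspan2 v w = {a *s v + b *s w | a b. True}"

end

theory Submission
  imports Defs
begin

(* With the primal error e = u - u_r and w = R_U^-1 r(u_r) one has A e = r(u_r) = R_U w, and
   l = -r_du - A^H u_du (r_du the dual residual of u_du) turns the output error into
     s - s_spd = -<r_du, e> - (<u_du, w>_U - <Theta u_du, Theta w>).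
   The first term is at most ||r_du||_U' ||r||_U' / eta by the inf-sup bound for A. The second is at
   most eps ||u_du||_U ||r||_U' by the embedding property on span {u_du, w}, and eta is also an inf-sup
   constant of A^H, so that eta ||u_du||_U <= ||l||_U' + ||r_du||_U'. The bound holds for every eps >= 0. *)

class conjugation =
  fixes conjugate :: "'a \<Rightarrow> 'a" and real_part :: "'a \<Rightarrow> real"

text \<open>\<open>r *\<^sub>R 1\<close> stands for \<open>of_real r\<close>, which is not available in a class specification.\<close>

class conj_normed_field = real_normed_field + conjugation +
  assumes conjugate_add: "conjugate (a + b) = conjugate a + conjugate b"
    and conjugate_mult: "conjugate (a * b) = conjugate a * conjugate b"
    and conjugate_scaleR_one: "conjugate (r *\<^sub>R 1) = r *\<^sub>R 1"
    and mult_conjugate_scaleR: "a * conjugate a = (norm a ^ 2) *\<^sub>R 1"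
    and conjugate_fixed_scaleR: "conjugate a = a \<Longrightarrow> a = real_part a *\<^sub>R 1"
    and conjugate_conjugate: "conjugate (conjugate a) = a"
    and real_part_add: "real_part (a + b) = real_part a + real_part b"
    and real_part_scaleR_one: "real_part (r *\<^sub>R 1) = r"
    and real_part_le_norm: "real_part a \<le> norm a"

instantiation real :: conj_normed_field
begin
definition conjugate_real :: "real \<Rightarrow> real" where "conjugate_real a = a"
definition real_part_real :: "real \<Rightarrow> real" where "real_part_real a = a"
instance
  by standard (simp_all add: conjugate_real_def real_part_real_def power2_eq_square)
end

instantiation complex :: conj_normed_field
begin
definition conjugate_complex :: "complex \<Rightarrow> complex" where "conjugate_complex = cnj"
definition real_part_complex :: "complex \<Rightarrow> real" where "real_part_complex = Re"
instance
proof
  fix a b :: complex and r :: real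
  show "conjugate (a + b) = conjugate a + conjugate b" "conjugate (a * b) = conjugate a * conjugate b"
    "conjugate (r *\<^sub>R 1 :: complex) = r *\<^sub>R 1" "conjugate (conjugate a) = a"
    "real_part (a + b) = real_part a + real_part b" "real_part (r *\<^sub>R 1 :: complex) = r"
    "real_part a \<le> norm a"
    by (simp_all add: conjugate_complex_def real_part_complex_def complex_Re_le_cmod)
  show "a * conjugate a = (norm a ^ 2) *\<^sub>R 1"
    by (simp add: conjugate_complex_def scaleR_conv_of_real complex_norm_square[symmetric])
  show "conjugate a = a \<Longrightarrow> a = real_part a *\<^sub>R 1"
    by (simp add: conjugate_complex_def real_part_complex_def complex_eq_iff cnj.ctr)
qed
end

lemma conjugate_of_real [simp]: "conjugate (of_real r :: 'a::conj_normed_field) = of_real r"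
  by (simp add: of_real_def conjugate_scaleR_one)

lemma real_part_of_real [simp]: "real_part (of_real r :: 'a::conj_normed_field) = r"
  by (simp add: of_real_def real_part_scaleR_one)

lemma mult_conjugate: "(a :: 'a::conj_normed_field) * conjugate a = of_real (norm a ^ 2)"
  by (simp add: of_real_def mult_conjugate_scaleR)

lemma conjugate_fixed: "conjugate a = a \<Longrightarrow> a = of_real (real_part (a :: 'a::conj_normed_field))"
  by (simp add: of_real_def conjugate_fixed_scaleR)

lemma real_part_zero [simp]: "real_part (0 :: 'a::conj_normed_field) = 0"
  using real_part_of_real [of 0] by simp

lemma conjugate_zero [simp]: "conjugate (0 :: 'a::conj_normed_field) = 0"
  using conjugate_add [of 0 0] by simp

lemma conjugate_minus: "conjugate (- a :: 'a::conj_normed_field) = - conjugate a"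
  using conjugate_add [of a "- a"] by (simp add: eq_neg_iff_add_eq_0 add.commute)

lemma conjugate_diff: "conjugate (a - b :: 'a::conj_normed_field) = conjugate a - conjugate b"
  using conjugate_add [of a "- b"] by (simp add: conjugate_minus)

lemma conjugate_sum: "conjugate (sum f A :: 'a::conj_normed_field) = (\<Sum>x\<in>A. conjugate (f x))"
  by (induction A rule: infinite_finite_induct) (simp_all add: conjugate_add)

definition hinner :: "'a::conj_normed_field^'n \<Rightarrow> 'a^'n \<Rightarrow> 'a" where
  "hinner x y = (\<Sum>i\<in>UNIV. conjugate (x$i) * y$i)"

definition hadjoint :: "'a::conj_normed_field^'n^'m \<Rightarrow> 'a^'m^'n" where
  "hadjoint M = (\<chi> i j. conjugate (M$j$i))"

lemma hinner_add_left: "hinner (x + y) z = hinner x z + hinner y z"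
  by (simp add: hinner_def conjugate_add sum.distrib distrib_right)

lemma hinner_add_right: "hinner x (y + z) = hinner x y + hinner x z"
  by (simp add: hinner_def sum.distrib distrib_left)

lemma hinner_diff_left: "hinner (x - y) z = hinner x z - hinner y z"
  by (simp add: hinner_def conjugate_diff sum_subtractf left_diff_distrib)

lemma hinner_diff_right: "hinner x (y - z) = hinner x y - hinner x z"
  by (simp add: hinner_def sum_subtractf right_diff_distrib)

lemma hinner_minus_left: "hinner (- x) y = - hinner x y"
  by (simp add: hinner_def conjugate_minus sum_negf)

lemma hinner_minus_right: "hinner x (- y) = - hinner x y"
  by (simp add: hinner_def sum_negf)

lemma hinner_scale_left: "hinner (c *s x) y = conjugate c * hinner x y"
  by (simp add: hinner_def conjugate_mult sum_distrib_left mult.assoc)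

lemma hinner_scale_right: "hinner x (c *s y) = c * hinner x y"
  by (simp add: hinner_def sum_distrib_left mult.left_commute)

lemma hinner_zero_left [simp]: "hinner 0 y = 0"
  by (simp add: hinner_def)

lemma hinner_zero_right [simp]: "hinner x 0 = 0"
  by (simp add: hinner_def)

lemma hinner_commute: "hinner y x = conjugate (hinner x y)"
  by (simp add: hinner_def conjugate_sum conjugate_mult conjugate_conjugate mult.commute)

lemma hinner_matrix_vector: "hinner x (M *v y) = hinner (hadjoint M *v x) y"
proof -
  have "hinner x (M *v y) = (\<Sum>i\<in>UNIV. \<Sum>j\<in>UNIV. conjugate (x$i) * (M$i$j * y$j))"
    by (simp add: hinner_def matrix_vector_mult_def sum_distrib_left)
  also have "\<dots> = (\<Sum>j\<in>UNIV. \<Sum>i\<in>UNIV. conjugate (x$i) * (M$i$j * y$j))"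
    by (rule sum.swap)
  also have "\<dots> = hinner (hadjoint M *v x) y"
    by (simp add: hinner_def matrix_vector_mult_def hadjoint_def conjugate_sum conjugate_mult
        conjugate_conjugate sum_distrib_left sum_distrib_right mult_ac)
  finally show ?thesis .
qed

lemma matrix_vector_mult_uminus: "(A::'a::ring_1^'n^'m) *v (- x) = - (A *v x)"
  by (simp add: matrix_vector_mult_def vec_eq_iff sum_negf)

lemma matrix_inv_cancel:
  assumes "invertible (A::'a::semiring_1^'n^'m)"
  shows "A *v (matrix_inv A *v x) = x" and "matrix_inv A *v (A *v y) = y"
proof -
  have "A ** matrix_inv A = mat 1 \<and> matrix_inv A ** A = mat 1"
    using assms unfolding invertible_def matrix_inv_def by (rule someI_ex)
  then show "A *v (matrix_inv A *v x) = x" and "matrix_inv A *v (A *v y) = y"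
    by (simp_all add: matrix_vector_mul_assoc)
qed

definition pos_def_herm :: "'a::conj_normed_field^'n^'n \<Rightarrow> bool" where
  "pos_def_herm R \<longleftrightarrow> hadjoint R = R \<and> (\<forall>x. x \<noteq> 0 \<longrightarrow> real_part (hinner (R *v x) x) > 0)"

definition unorm :: "'a::conj_normed_field^'n^'n \<Rightarrow> 'a^'n \<Rightarrow> real" where
  "unorm R x = sqrt (real_part (hinner (R *v x) x))"

definition dual_unorm :: "'a::conj_normed_field^'n^'n \<Rightarrow> 'a^'n \<Rightarrow> real" where
  "dual_unorm R y = sqrt (real_part (hinner y (matrix_inv R *v y)))"

locale pos_def_hermitian =
  fixes R :: "'a::conj_normed_field^'n^'n"
  assumes pos_def: "pos_def_herm R"
begin

lemma hinner_swap: "hinner (R *v x) y = hinner x (R *v y)"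
  using pos_def hinner_matrix_vector [of x R y] by (simp add: pos_def_herm_def)

lemma hinner_self_real: "hinner (R *v x) x = of_real (real_part (hinner (R *v x) x))"
  by (rule conjugate_fixed) (metis hinner_commute hinner_swap)

lemma real_part_hinner_self_nonneg: "real_part (hinner (R *v x) x) \<ge> 0"
  using pos_def by (cases "x = 0") (auto simp: pos_def_herm_def less_imp_le)

lemma unorm_nonneg: "unorm R x \<ge> 0"
  by (simp add: unorm_def real_part_hinner_self_nonneg)

lemma unorm_pos: "x \<noteq> 0 \<Longrightarrow> unorm R x > 0"
  using pos_def by (simp add: unorm_def pos_def_herm_def)

lemma unorm_power2: "unorm R x ^ 2 = real_part (hinner (R *v x) x)"
  by (simp add: unorm_def real_part_hinner_self_nonneg)

lemma invertible: "invertible R"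
proof -
  have "x = 0" if "R *v x = 0" for x
    using pos_def that by (metis pos_def_herm_def hinner_zero_left real_part_of_real of_real_0 less_irrefl)
  then show ?thesis
    using matrix_left_invertible_ker invertible_left_inverse by blast
qed

lemma cauchy_schwarz: "norm (hinner (R *v x) y) \<le> unorm R x * unorm R y"
proof (cases "y = 0")
  case True
  then show ?thesis by (simp add: unorm_def)
next
  case False
  define a where "a = real_part (hinner (R *v x) x)"
  define b where "b = real_part (hinner (R *v y) y)"
  define c where "c = hinner (R *v x) y"
  have "b > 0"
    using pos_def False by (simp add: b_def pos_def_herm_def)
  \<comment> \<open>\<open>b x - c\<^sup>* y\<close> is \<open>b\<close> times the component of \<open>x\<close> orthogonal to \<open>y\<close>\<close>
  have "hinner (R *v y) x = conjugate c"
    by (metis c_def hinner_commute hinner_swap)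
  then have "hinner (R *v (of_real b *s x - conjugate c *s y)) (of_real b *s x - conjugate c *s y)
      = of_real b * of_real b * of_real a - of_real b * (c * conjugate c)"
    using hinner_self_real [of x] hinner_self_real [of y]
    by (simp add: a_def [symmetric] b_def [symmetric] c_def [symmetric] vector_scalar_commute
        matrix_vector_mult_diff_distrib hinner_diff_left hinner_diff_right hinner_scale_left
        hinner_scale_right conjugate_conjugate algebra_simps)
  also have "\<dots> = of_real (b * (b * a - norm c ^ 2))"
    by (simp add: mult_conjugate algebra_simps)
  finally have "0 \<le> b * (b * a - norm c ^ 2)"
    by (metis real_part_hinner_self_nonneg real_part_of_real)
  then have "norm c ^ 2 \<le> a * b"
    using \<open>b > 0\<close> by (simp add: zero_le_mult_iff algebra_simps)
  then have "norm c \<le> sqrt (a * b)"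
    by (simp add: real_le_rsqrt)
  then show ?thesis
    by (simp add: a_def b_def c_def unorm_def real_sqrt_mult)
qed

lemma unorm_triangle: "unorm R (x + y) \<le> unorm R x + unorm R y"
proof -
  have cross: "real_part (hinner (R *v u) v) \<le> unorm R u * unorm R v" for u v
    using cauchy_schwarz real_part_le_norm order_trans by blast
  have "unorm R (x + y) ^ 2 = real_part (hinner (R *v x) x) + real_part (hinner (R *v x) y)
      + real_part (hinner (R *v y) x) + real_part (hinner (R *v y) y)"
    by (simp add: unorm_power2 matrix_vector_right_distrib hinner_add_left hinner_add_right
        real_part_add)
  also have "\<dots> \<le> unorm R x ^ 2 + 2 * (unorm R x * unorm R y) + unorm R y ^ 2"
    using cross [of x y] cross [of y x] by (simp add: unorm_power2 mult.commute)
  also have "\<dots> = (unorm R x + unorm R y) ^ 2"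
    by (simp add: power2_sum)
  finally show ?thesis
    by (rule power2_le_imp_le) (simp add: unorm_nonneg)
qed

lemma unorm_minus: "unorm R (- x) = unorm R x"
  by (simp add: unorm_def matrix_vector_mult_uminus hinner_minus_left hinner_minus_right)

lemma dual_unorm_eq_unorm: "dual_unorm R y = unorm R (matrix_inv R *v y)"
  by (simp add: dual_unorm_def unorm_def matrix_inv_cancel(1) [OF invertible])

lemma dual_unorm_matrix: "dual_unorm R (R *v x) = unorm R x"
  by (simp add: dual_unorm_eq_unorm matrix_inv_cancel(2) [OF invertible])

lemma dual_unorm_nonneg: "dual_unorm R y \<ge> 0"
  by (simp add: dual_unorm_eq_unorm unorm_nonneg)

lemma dual_unorm_minus: "dual_unorm R (- y) = dual_unorm R y"
  by (simp add: dual_unorm_eq_unorm matrix_vector_mult_uminus unorm_minus)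

lemma dual_cauchy_schwarz: "norm (hinner y x) \<le> dual_unorm R y * unorm R x"
  using cauchy_schwarz [of "matrix_inv R *v y" x]
  by (simp add: dual_unorm_eq_unorm matrix_inv_cancel(1) [OF invertible])

lemma dual_unorm_diff_le: "dual_unorm R (x - y) \<le> dual_unorm R x + dual_unorm R y"
  using unorm_triangle [of "matrix_inv R *v x" "- (matrix_inv R *v y)"]
  by (simp add: dual_unorm_eq_unorm unorm_minus matrix_vector_mult_diff_distrib)

lemma inf_sup_bound:
  assumes "\<forall>x. x \<noteq> 0 \<longrightarrow> \<eta> \<le> dual_unorm R (A *v x) / unorm R x"
  shows "\<eta> * unorm R x \<le> dual_unorm R (A *v x)"
proof (cases "x = 0")
  case True
  then show ?thesis by (simp add: unorm_def dual_unorm_nonneg)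
next
  case False
  then have "\<eta> \<le> dual_unorm R (A *v x) / unorm R x"
    using assms by blast
  then show ?thesis
    by (simp add: pos_le_divide_eq [OF unorm_pos [OF False]] mult.commute)
qed

lemma adjoint_inf_sup_bound:
  assumes "invertible A" and "0 \<le> \<eta>"
    and inf_sup: "\<forall>x. x \<noteq> 0 \<longrightarrow> \<eta> \<le> dual_unorm R (A *v x) / unorm R x"
  shows "\<eta> * unorm R y \<le> dual_unorm R (hadjoint A *v y)"
proof -
  define z where "z = matrix_inv A *v (R *v y)"
  have Az: "A *v z = R *v y"
    by (simp add: z_def matrix_inv_cancel(1) [OF assms(1)])
  have "unorm R y ^ 2 = real_part (hinner y (A *v z))"
    by (simp add: unorm_power2 hinner_swap Az)
  also have "\<dots> \<le> dual_unorm R (hadjoint A *v y) * unorm R z"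
    using dual_cauchy_schwarz real_part_le_norm order_trans by (metis hinner_matrix_vector)
  finally have "\<eta> * unorm R y ^ 2 \<le> dual_unorm R (hadjoint A *v y) * (\<eta> * unorm R z)"
    using \<open>0 \<le> \<eta>\<close> by (metis mult_left_mono mult.left_commute)
  also have "\<eta> * unorm R z \<le> unorm R y"
    using inf_sup_bound [OF inf_sup, of z] by (simp add: Az dual_unorm_matrix)
  then have "dual_unorm R (hadjoint A *v y) * (\<eta> * unorm R z)
      \<le> dual_unorm R (hadjoint A *v y) * unorm R y"
    by (simp add: mult_left_mono dual_unorm_nonneg)
  finally have "(\<eta> * unorm R y) * unorm R y \<le> dual_unorm R (hadjoint A *v y) * unorm R y"
    by (simp add: power2_eq_square mult.assoc)
  then show ?thesis
    using unorm_nonneg [of y] dual_unorm_nonneg [of "hadjoint A *v y"]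
    by (cases "unorm R y = 0") (auto dest: mult_right_le_imp_le)
qed

lemma adjoint_inf_sup_bound_dual_residual:
  assumes "invertible A" and "0 \<le> \<eta>"
    and "\<forall>x. x \<noteq> 0 \<longrightarrow> \<eta> \<le> dual_unorm R (A *v x) / unorm R x"
  shows "\<eta> * unorm R v \<le> dual_unorm R l + dual_unorm R (- l - hadjoint A *v v)"
proof -
  define d where "d = - l - hadjoint A *v v"
  have "hadjoint A *v v = - d - l"
    by (simp add: d_def)
  then have "\<eta> * unorm R v \<le> dual_unorm R (- d - l)"
    using adjoint_inf_sup_bound [OF assms] by metis
  also have "\<dots> \<le> dual_unorm R d + dual_unorm R l"
    using dual_unorm_diff_le [of "- d" l] by (simp only: dual_unorm_minus)
  finally show ?thesis
    by (simp add: d_def add.commute)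
qed

lemma output_error_eq:
  assumes "A *v e = r" and "R *v w = r"
  shows "hinner l e = - hinner (- l - hadjoint A *v v) e - hinner (R *v v) w"
  by (simp add: hinner_diff_left hinner_minus_left hinner_swap assms hinner_matrix_vector [symmetric])

lemma output_error_bound:
  fixes A :: "'a^'n^'n" and b l ur udu :: "'a^'n" and \<Theta> :: "'a^'n^'k"
  defines "w \<equiv> matrix_inv R *v (b - A *v ur)"
  assumes "invertible A" and "\<eta> > 0" and "0 \<le> \<epsilon>"
    and inf_sup: "\<forall>x. x \<noteq> 0 \<longrightarrow> \<eta> \<le> dual_unorm R (A *v x) / unorm R x"
    and embedding: "\<forall>x\<in>{a *s udu + c *s w | a c. True}. \<forall>y\<in>{a *s udu + c *s w | a c. True}.
      norm (hinner (R *v x) y - hinner (\<Theta> *v x) (\<Theta> *v y)) \<le> \<epsilon> * unorm R x * unorm R y"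
  shows "norm (hinner l (matrix_inv A *v b) - (hinner l ur - hinner (\<Theta> *v udu) (\<Theta> *v w)))
    \<le> dual_unorm R (b - A *v ur) / \<eta> *
      ((1 + \<epsilon>) * dual_unorm R (- l - hadjoint A *v udu) + \<epsilon> * dual_unorm R l)"
proof -
  define err where "err = hinner l (matrix_inv A *v b) - (hinner l ur - hinner (\<Theta> *v udu) (\<Theta> *v w))"
  define e where "e = matrix_inv A *v b - ur"
  define rdu where "rdu = - l - hadjoint A *v udu"
  define Nr where "Nr = dual_unorm R (b - A *v ur)"
  define Nd where "Nd = dual_unorm R rdu"
  define Nl where "Nl = dual_unorm R l"
  have Ae: "A *v e = b - A *v ur"
    by (simp add: e_def matrix_vector_mult_diff_distrib matrix_inv_cancel(1) [OF assms(2)])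
  have Rw: "R *v w = b - A *v ur"
    by (simp add: w_def matrix_inv_cancel(1) [OF invertible])
  have "udu = 1 *s udu + 0 *s w" and "w = 0 *s udu + 1 *s w"
    by simp_all
  then have "udu \<in> {a *s udu + c *s w | a c. True}" and "w \<in> {a *s udu + c *s w | a c. True}"
    by blast+
  then have discrepancy: "norm (hinner (R *v udu) w - hinner (\<Theta> *v udu) (\<Theta> *v w))
      \<le> \<epsilon> * unorm R udu * Nr"
    using embedding by (force simp: Nr_def w_def dual_unorm_eq_unorm)
  have "\<eta> * unorm R e \<le> Nr"
    using inf_sup_bound [OF inf_sup, of e] by (simp add: Ae Nr_def)
  have "\<eta> * unorm R udu \<le> Nl + Nd"
    using adjoint_inf_sup_bound_dual_residual [OF assms(2) _ inf_sup, of udu l] \<open>\<eta> > 0\<close>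
    by (simp add: Nl_def Nd_def rdu_def)
  have "hinner l e = - hinner rdu e - hinner (R *v udu) w"
    unfolding rdu_def by (rule output_error_eq [OF Ae Rw])
  then have "err = - (hinner rdu e + (hinner (R *v udu) w - hinner (\<Theta> *v udu) (\<Theta> *v w)))"
    by (simp add: err_def e_def hinner_diff_right algebra_simps)
  then have "norm err \<le> norm (hinner rdu e) + norm (hinner (R *v udu) w - hinner (\<Theta> *v udu) (\<Theta> *v w))"
    by (simp only: norm_minus_cancel norm_triangle_ineq)
  also have "\<dots> \<le> Nd * unorm R e + \<epsilon> * unorm R udu * Nr"
    using dual_cauchy_schwarz [of rdu e] discrepancy by (simp add: Nd_def)
  finally have "\<eta> * norm err \<le> \<eta> * (Nd * unorm R e + \<epsilon> * unorm R udu * Nr)"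
    using \<open>\<eta> > 0\<close> by (intro mult_left_mono) simp_all
  also have "\<dots> = Nd * (\<eta> * unorm R e) + \<epsilon> * Nr * (\<eta> * unorm R udu)"
    by (simp add: algebra_simps)
  also have "\<dots> \<le> Nd * Nr + \<epsilon> * Nr * (Nl + Nd)"
    using \<open>\<eta> * unorm R e \<le> Nr\<close> \<open>\<eta> * unorm R udu \<le> Nl + Nd\<close> \<open>0 \<le> \<epsilon>\<close>
    by (intro add_mono mult_left_mono) (simp_all add: Nd_def Nr_def dual_unorm_nonneg)
  also have "\<dots> = Nr * ((1 + \<epsilon>) * Nd + \<epsilon> * Nl)"
    by (simp add: algebra_simps)
  finally show ?thesis
    using \<open>\<eta> > 0\<close> by (simp add: err_def Nr_def Nd_def Nl_def rdu_def pos_le_divide_eq mult.commute)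
qed

end

lemma rip_eq_hinner: "rip = hinner"
  by (simp add: fun_eq_iff rip_def hinner_def conjugate_real_def)

lemma cip_eq_hinner: "cip = hinner"
  by (simp add: fun_eq_iff cip_def hinner_def conjugate_complex_def)

lemma transpose_eq_hadjoint: "transpose (M :: real^'n^'m) = hadjoint M"
  by (simp add: transpose_def hadjoint_def conjugate_real_def)

lemma cadj_eq_hadjoint: "cadj = hadjoint"
  by (simp add: fun_eq_iff cadj_def hadjoint_def conjugate_complex_def)

lemma r_spd_eq_pos_def_herm: "r_spd = pos_def_herm"
  by (simp add: fun_eq_iff r_spd_def pos_def_herm_def rip_eq_hinner transpose_eq_hadjoint
      real_part_real_def)

lemma c_spd_eq_pos_def_herm: "c_spd = pos_def_herm"
  by (simp add: fun_eq_iff c_spd_def pos_def_herm_def cip_eq_hinner cadj_eq_hadjoint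
      real_part_complex_def)

lemma ripU_eq_hinner: "ripU R x y = hinner (R *v x) y"
  by (simp add: ripU_def rip_eq_hinner)

lemma cipU_eq_hinner: "cipU R x y = hinner (R *v x) y"
  by (simp add: cipU_def cip_eq_hinner)

lemma rnormU_eq_unorm: "rnormU = unorm"
  by (simp add: fun_eq_iff rnormU_def unorm_def ripU_eq_hinner real_part_real_def)

lemma cnormU_eq_unorm: "cnormU = unorm"
  by (simp add: fun_eq_iff cnormU_def unorm_def cipU_eq_hinner real_part_complex_def)

lemma rnormU'_eq_dual_unorm: "rnormU' = dual_unorm"
  by (simp add: fun_eq_iff rnormU'_def dual_unorm_def rip_eq_hinner real_part_real_def)

lemma cnormU'_eq_dual_unorm: "cnormU' = dual_unorm"
  by (simp add: fun_eq_iff cnormU'_def dual_unorm_def cip_eq_hinner real_part_complex_def)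

theorem proposition4p6:
  shows
  "(\<forall>(RU::real^'n^'n) (A::real^'n^'n) (b::real^'n) (l::real^'n) (ur::real^'n) (udu::real^'n)
       (\<Theta>::real^'n^'k) (\<eta>::real) (\<epsilon>::real).
     let Rinv = matrix_inv RU; u = matrix_inv A *v b; s = rip l u;
         r = (\<lambda>x. b - A *v x); rdu = (\<lambda>x. - l - transpose A *v x);
         sr = rip l ur;
         sspd = sr - rip (\<Theta> *v udu) (\<Theta> *v (Rinv *v r ur))
     in r_spd RU \<longrightarrow> invertible A \<longrightarrow> \<eta> > 0 \<longrightarrow>
        (\<forall>x. x \<noteq> 0 \<longrightarrow> \<eta> \<le> rnormU' RU (A *v x) / rnormU RU x) \<longrightarrow>
        0 \<le> \<epsilon> \<longrightarrow> \<epsilon> < 1 \<longrightarrow>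
        (\<forall>x\<in>rspan2 udu (Rinv *v r ur). \<forall>y\<in>rspan2 udu (Rinv *v r ur).
            \<bar>ripU RU x y - rip (\<Theta> *v x) (\<Theta> *v y)\<bar> \<le> \<epsilon> * rnormU RU x * rnormU RU y) \<longrightarrow>
        \<bar>s - sspd\<bar> \<le> rnormU' RU (r ur) / \<eta> *
            ((1 + \<epsilon>) * rnormU' RU (rdu udu) + \<epsilon> * rnormU' RU l))
   \<and>
   (\<forall>(RU::complex^'n^'n) (A::complex^'n^'n) (b::complex^'n) (l::complex^'n) (ur::complex^'n)
       (udu::complex^'n) (\<Theta>::complex^'n^'k) (\<eta>::real) (\<epsilon>::real).
     let Rinv = matrix_inv RU; u = matrix_inv A *v b; s = cip l u;
         r = (\<lambda>x. b - A *v x); rdu = (\<lambda>x. - l - cadj A *v x);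
         sr = cip l ur;
         sspd = sr - cip (\<Theta> *v udu) (\<Theta> *v (Rinv *v r ur))
     in c_spd RU \<longrightarrow> invertible A \<longrightarrow> \<eta> > 0 \<longrightarrow>
        (\<forall>x. x \<noteq> 0 \<longrightarrow> \<eta> \<le> cnormU' RU (A *v x) / cnormU RU x) \<longrightarrow>
        0 \<le> \<epsilon> \<longrightarrow> \<epsilon> < 1 \<longrightarrow>
        (\<forall>x\<in>cspan2 udu (Rinv *v r ur). \<forall>y\<in>cspan2 udu (Rinv *v r ur).
            cmod (cipU RU x y - cip (\<Theta> *v x) (\<Theta> *v y)) \<le> \<epsilon> * cnormU RU x * cnormU RU y) \<longrightarrow>
        cmod (s - sspd) \<le> cnormU' RU (r ur) / \<eta> *
            ((1 + \<epsilon>) * cnormU' RU (rdu udu) + \<epsilon> * cnormU' RU l))"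
  unfolding Let_def rspan2_def cspan2_def rip_eq_hinner cip_eq_hinner transpose_eq_hadjoint
    cadj_eq_hadjoint r_spd_eq_pos_def_herm c_spd_eq_pos_def_herm ripU_eq_hinner cipU_eq_hinner
    rnormU_eq_unorm cnormU_eq_unorm rnormU'_eq_dual_unorm cnormU'_eq_dual_unorm
    real_norm_def [symmetric]
  by (intro conjI allI impI; rule pos_def_hermitian.output_error_bound [OF pos_def_hermitian.intro])

end
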